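(* Let $(\Omega,\mathcal F,\mathbb P)$ be either an atomless probability space or the equiprobable space $(\{1,\dots,m\},2^{\{1,\dots,m\}},\mathbb P)$ with $\mathbb P(\{k\})=1/m$. Let $\mathcal P_1,\dots,\mathcal P_n$ be nonempty sets of probability measures on $(\Omega,\mathcal F)$, all absolutely continuous with respect to $\mathbb P$, and let $\alpha_1,\dots,\alpha_n\in(0,1)$. Fix a bounded measurable $X$. Suppose that $\mathrm d\mathbb Q/\mathrm d\mathbb P$ is decreasing in $X$ for every $\mathbb Q\in\mathcal P_1$ and increasing in $X$ for every $\mathbb Q\in\mathcal P_i$, $i=2,\dots,n$. Let $x^*=\mathop{\square}_{i=1}^n\sup_{\mathbb Q\in\mathcal P_i}\mathrm{VaR}^{\mathbb Q}_{\alpha_i}(X)$ and suppose the optimal allocation exists in the sense that $x^*>-\infty$ and there is $(A_1,\dots,A_n)\in\Pi_n$ with $\sup_{\mathbb Q\in\mathcal P_i}\mathbb Q(A_i\cap\{X>x^*\})\le\alpha_i$ for all $i$ (so that $X_i=(X-x^* )\mathds 1_{A_i}+x^*/n$ is an optimal allocation). Then such an optimal composition $(A_1^*,\dots,A_n^* )\in\Pi_n$ can be chosen so that $A_1^*$ is a tail event of $X$, meaning $X(\omega)\ge X(\omega')$ for all $\omega\in A_1^*$ and $\omega'\notin A_1^*$.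
   Context: For a probability $\mathbb Q$ and $\alpha\in(0,1)$, $\mathrm{VaR}^{\mathbb Q}_\alpha(X)=\inf\{x\in\mathbb R:\mathbb Q(X\ge x)\le\alpha\}$. Inf-convolution: $\mathop{\square}_{i=1}^n\rho_i(X)=\inf\{\sum_i\rho_i(X_i): X_i$ bounded measurable, $\sum_iX_i=X\}$. $\Pi_n=\{(A_1,\dots,A_n)\in\mathcal F^n:\bigcup_iA_i=\Omega\}$. "$\mathrm d\mathbb Q/\mathrm d\mathbb P$ is decreasing (resp. increasing) in $X$" means the Radon–Nikodym density is a decreasing (resp. increasing) function of $X$. *)

theory Defs
  imports "HOL-Probability.Probability"
begin

definition VaR :: "'a measure \<Rightarrow> real \<Rightarrow> ('a \<Rightarrow> real) \<Rightarrow> real" where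
  "VaR Q \<alpha> X = Inf {x. measure Q {\<omega> \<in> space Q. X \<omega> \<ge> x} \<le> \<alpha>}"

definition bounded_rv :: "'a measure \<Rightarrow> ('a \<Rightarrow> real) \<Rightarrow> bool" where
  "bounded_rv M Y \<longleftrightarrow> Y \<in> borel_measurable M \<and> (\<exists>B. \<forall>\<omega>\<in>space M. \<bar>Y \<omega>\<bar> \<le> B)"

definition robust_VaR :: "'a measure set \<Rightarrow> real \<Rightarrow> ('a \<Rightarrow> real) \<Rightarrow> ereal" where
  "robust_VaR PP \<alpha> Y = (SUP Q\<in>PP. ereal (VaR Q \<alpha> Y))"

definition inf_conv :: "'a measure \<Rightarrow> nat \<Rightarrow> (nat \<Rightarrow> ('a \<Rightarrow> real) \<Rightarrow> ereal) \<Rightarrow> ('a \<Rightarrow> real) \<Rightarrow> ereal" where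
  "inf_conv M n \<rho> X = (INF Xs\<in>{Xs :: nat \<Rightarrow> 'a \<Rightarrow> real.
        (\<forall>i\<in>{1..n}. bounded_rv M (Xs i)) \<and> (\<forall>\<omega>\<in>space M. (\<Sum>i=1..n. Xs i \<omega>) = X \<omega>)}.
      \<Sum>i=1..n. \<rho> i (Xs i))"

definition Pi_n :: "'a measure \<Rightarrow> nat \<Rightarrow> (nat \<Rightarrow> 'a set) set" where
  "Pi_n M n = {A. (\<forall>i\<in>{1..n}. A i \<in> sets M) \<and> (\<Union>i\<in>{1..n}. A i) = space M}"

definition atomless :: "'a measure \<Rightarrow> bool" where
  "atomless M \<longleftrightarrow> (\<forall>A\<in>sets M. 0 < measure M A \<longrightarrow>
      (\<exists>B\<in>sets M. B \<subseteq> A \<and> 0 < measure M B \<and> measure M B < measure M A))"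

text \<open>Equiprobable finite space ({1..m}, power set, P({k}) = 1/m), up to relabelling of points.\<close>
definition equiprobable :: "'a measure \<Rightarrow> bool" where
  "equiprobable M \<longleftrightarrow> finite (space M) \<and> space M \<noteq> {} \<and> sets M = Pow (space M) \<and>
      (\<forall>\<omega>\<in>space M. measure M {\<omega>} = 1 / real (card (space M)))"

text \<open>dQ/dP is decreasing (resp. increasing) in X: the Radon-Nikodym density equals
  (P-a.s., densities being defined only a.s.) a decreasing (resp. increasing) function of X.\<close>
definition density_decreasing_in :: "'a measure \<Rightarrow> 'a measure \<Rightarrow> ('a \<Rightarrow> real) \<Rightarrow> bool" where
  "density_decreasing_in M Q X \<longleftrightarrow>
     (\<exists>f :: real \<Rightarrow> ennreal. antimono f \<and> (AE \<omega> in M. RN_deriv M Q \<omega> = f (X \<omega>)))"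

definition density_increasing_in :: "'a measure \<Rightarrow> 'a measure \<Rightarrow> ('a \<Rightarrow> real) \<Rightarrow> bool" where
  "density_increasing_in M Q X \<longleftrightarrow>
     (\<exists>f :: real \<Rightarrow> ennreal. mono f \<and> (AE \<omega> in M. RN_deriv M Q \<omega> = f (X \<omega>)))"

end

theory Submission
  imports Defs
begin

text \<open>
  Only the parts \<open>A\<^sub>i \<inter> S\<close> of the composition inside \<open>S = {X > x\<^sup>*}\<close> matter.
  Let \<open>D\<close> be the part of \<open>S\<close> covered by \<open>A\<^sub>1\<close> alone, and replace \<open>A\<^sub>1 \<inter> S\<close> by an
  upper set \<open>B\<close> of \<open>X\<close> inside \<open>S\<close> with \<open>P(B) = P(D)\<close>, which exists because the base space is
  atomless or equiprobable. Then \<open>B - D\<close> and \<open>D - B\<close> have equal \<open>P\<close>-probability, \<open>X\<close> is larger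
  on the former, and both can be cut into pieces \<open>R\<^sub>i \<subseteq> A\<^sub>i\<close> and \<open>C\<^sub>i\<close> (\<open>i \<ge> 2\<close>) with
  \<open>P(R\<^sub>i) = P(C\<^sub>i)\<close>; agent \<open>i\<close> hands \<open>R\<^sub>i\<close> to agent 1 and receives \<open>C\<^sub>i\<close>. Since
  \<open>dQ/dP\<close> is a decreasing (resp. increasing) function of \<open>X\<close>, such a swap of equal
  \<open>P\<close>-mass towards larger (resp. smaller) values of \<open>X\<close> cannot increase \<open>Q(A\<^sub>1 \<inter> S)\<close>
  (resp. \<open>Q(A\<^sub>i \<inter> S)\<close>).
\<close>

lemma (in finite_measure) measure_le_if_RN_deriv_separated:
  assumes Q: "finite_measure Q" "sets Q = sets M" "absolutely_continuous M Q"
    and U: "U \<in> sets M" and L: "L \<in> sets M"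
    and below: "AE \<omega> in M. \<omega> \<in> U \<longrightarrow> RN_deriv M Q \<omega> \<le> k"
    and above: "AE \<omega> in M. \<omega> \<in> L \<longrightarrow> k \<le> RN_deriv M Q \<omega>"
    and le: "measure M U \<le> measure M L"
  shows "measure Q U \<le> measure Q L"
proof -
  interpret Q: finite_measure Q by fact
  have Q_eq: "density M (RN_deriv M Q) = Q"
    using Q by (simp add: density_RN_deriv)
  have Q_density: "emeasure Q A = (\<integral>\<^sup>+\<omega>. RN_deriv M Q \<omega> * indicator A \<omega> \<partial>M)" if "A \<in> sets M" for A
    using that by (subst Q_eq[symmetric]) (simp add: emeasure_density)
  have "emeasure Q U \<le> (\<integral>\<^sup>+\<omega>. k * indicator U \<omega> \<partial>M)"
    unfolding Q_density[OF U] using below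
    by (intro nn_integral_mono_AE) (auto split: split_indicator elim!: eventually_mono)
  also have "\<dots> = k * emeasure M U"
    using U by (rule nn_integral_cmult_indicator)
  also have "\<dots> \<le> k * emeasure M L"
    using le by (intro mult_left_mono) (simp_all add: emeasure_eq_measure)
  also have "\<dots> = (\<integral>\<^sup>+\<omega>. k * indicator L \<omega> \<partial>M)"
    using L by (rule nn_integral_cmult_indicator[symmetric])
  also have "\<dots> \<le> emeasure Q L"
    unfolding Q_density[OF L] using above
    by (intro nn_integral_mono_AE) (auto split: split_indicator elim!: eventually_mono)
  finally show ?thesis
    by (simp add: Q.emeasure_eq_measure)
qed

lemma (in finite_measure) measure_le_if_density_decreasing:
  assumes Q: "finite_measure Q" "sets Q = sets M" "absolutely_continuous M Q"
    and dec: "density_decreasing_in M Q X"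
    and "U \<in> sets M" "L \<in> sets M" "\<forall>\<omega>\<in>U. c \<le> X \<omega>" "\<forall>\<omega>\<in>L. X \<omega> \<le> c"
    and "measure M U \<le> measure M L"
  shows "measure Q U \<le> measure Q L"
proof -
  obtain f where "antimono f" "AE \<omega> in M. RN_deriv M Q \<omega> = f (X \<omega>)"
    using dec unfolding density_decreasing_in_def by blast
  then have "AE \<omega> in M. \<omega> \<in> U \<longrightarrow> RN_deriv M Q \<omega> \<le> f c"
    and "AE \<omega> in M. \<omega> \<in> L \<longrightarrow> f c \<le> RN_deriv M Q \<omega>"
    using assms(7,8) by (auto simp: antimono_def elim!: eventually_mono)
  then show ?thesis
    using measure_le_if_RN_deriv_separated assms by blast
qed

lemma (in finite_measure) measure_le_if_density_increasing:
  assumes Q: "finite_measure Q" "sets Q = sets M" "absolutely_continuous M Q"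
    and inc: "density_increasing_in M Q X"
    and "U \<in> sets M" "L \<in> sets M" "\<forall>\<omega>\<in>U. X \<omega> \<le> c" "\<forall>\<omega>\<in>L. c \<le> X \<omega>"
    and "measure M U \<le> measure M L"
  shows "measure Q U \<le> measure Q L"
proof -
  obtain f where "mono f" "AE \<omega> in M. RN_deriv M Q \<omega> = f (X \<omega>)"
    using inc unfolding density_increasing_in_def by blast
  then have "AE \<omega> in M. \<omega> \<in> U \<longrightarrow> RN_deriv M Q \<omega> \<le> f c"
    and "AE \<omega> in M. \<omega> \<in> L \<longrightarrow> f c \<le> RN_deriv M Q \<omega>"
    using assms(7,8) by (auto simp: mono_def elim!: eventually_mono)
  then show ?thesis
    using measure_le_if_RN_deriv_separated assms by blast
qed

lemma (in finite_measure) atomless_small_subevent: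
  assumes atomless: "atomless M" and A: "A \<in> sets M" "0 < measure M A" and e: "0 < e"
  shows "\<exists>B\<in>sets M. B \<subseteq> A \<and> 0 < measure M B \<and> measure M B < e"
proof -
  have halving: "\<exists>B\<in>sets M. B \<subseteq> A \<and> 0 < measure M B \<and> measure M B \<le> measure M A * (1/2) ^ k" for k
  proof (induction k)
    case 0
    then show ?case using A by auto
  next
    case (Suc k)
    then obtain B where B: "B \<in> sets M" "B \<subseteq> A" "0 < measure M B" "measure M B \<le> measure M A * (1/2) ^ k"
      by blast
    then obtain C where C: "C \<in> sets M" "C \<subseteq> B" "0 < measure M C" "measure M C < measure M B"
      using atomless unfolding atomless_def by blast
    have "measure M (B - C) = measure M B - measure M C"
      using B C by (simp add: finite_measure_Diff)
    show ?case
    proof (cases "measure M C \<le> measure M B / 2")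
      case True
      then show ?thesis using B C by (intro bexI[of _ C]) auto
    next
      case False
      then show ?thesis using B C \<open>measure M (B - C) = _\<close> by (intro bexI[of _ "B - C"]) auto
    qed
  qed
  obtain k where "(1/2) ^ k < e / measure M A"
    using real_arch_pow_inv[of "e / measure M A" "1/2"] A e by auto
  then have "measure M A * (1/2) ^ k < e"
    using A by (simp add: field_simps)
  moreover obtain B where "B \<in> sets M" "B \<subseteq> A" "0 < measure M B" "measure M B \<le> measure M A * (1/2) ^ k"
    using halving by blast
  ultimately show ?thesis
    by (intro bexI[of _ B]) auto
qed

lemma (in finite_measure) exists_half_maximal_subevent:
  assumes "0 \<le> r"
  shows "\<exists>G\<in>sets M. G \<subseteq> E \<and> measure M G \<le> r \<and>
           (\<forall>B\<in>sets M. B \<subseteq> E \<longrightarrow> measure M B \<le> r \<longrightarrow> measure M B \<le> 2 * measure M G)"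
proof -
  define V where "V = {measure M B | B. B \<in> sets M \<and> B \<subseteq> E \<and> measure M B \<le> r}"
  have "0 \<in> V"
    using assms unfolding V_def by (auto intro!: exI[of _ "{}"])
  have bdd: "bdd_above V"
    unfolding V_def by (intro bdd_aboveI[of _ r]) auto
  have le_Sup: "\<forall>B\<in>sets M. B \<subseteq> E \<longrightarrow> measure M B \<le> r \<longrightarrow> measure M B \<le> Sup V"
    unfolding V_def by (auto intro: cSup_upper[OF _ bdd[unfolded V_def]])
  show ?thesis
  proof (cases "Sup V \<le> 0")
    case True
    then show ?thesis
      using assms le_Sup by (intro bexI[of _ "{}"]) fastforce+
  next
    case False
    then have "Sup V / 2 < Sup V"
      by simp
    moreover have "V \<noteq> {}"
      using \<open>0 \<in> V\<close> by blast
    ultimately have "\<exists>x\<in>V. Sup V / 2 < x"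
      using less_cSup_iff[OF _ bdd] by blast
    then obtain G where "G \<in> sets M" "G \<subseteq> E" "measure M G \<le> r" "Sup V / 2 < measure M G"
      unfolding V_def by blast
    then show ?thesis
      using le_Sup by (intro bexI[of _ G]) fastforce+
  qed
qed

lemma (in finite_measure) exists_greedy_sequence:
  assumes t: "0 \<le> t"
  obtains Fs :: "nat \<Rightarrow> 'a set" where "incseq Fs" "\<And>k. Fs k \<in> sets M" "\<And>k. Fs k \<subseteq> E"
    "\<And>k. measure M (Fs k) \<le> t"
    "\<And>k B. B \<in> sets M \<Longrightarrow> B \<subseteq> E - Fs k \<Longrightarrow> measure M B \<le> t - measure M (Fs k) \<Longrightarrow>
       measure M B \<le> 2 * (measure M (Fs (Suc k)) - measure M (Fs k))"
proof -
  define fits where "fits F G \<longleftrightarrow> G \<in> sets M \<and> G \<subseteq> E - F \<and> measure M G \<le> t - measure M F" for F G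
  have "\<forall>F. \<exists>G. measure M F \<le> t \<longrightarrow> fits F G \<and> (\<forall>B. fits F B \<longrightarrow> measure M B \<le> 2 * measure M G)"
    using exists_half_maximal_subevent unfolding fits_def by (metis diff_ge_0_iff_ge)
  then obtain g where g: "\<And>F. measure M F \<le> t \<Longrightarrow>
      fits F (g F) \<and> (\<forall>B. fits F B \<longrightarrow> measure M B \<le> 2 * measure M (g F))"
    by metis
  define Fs where "Fs k = ((\<lambda>F. F \<union> g F) ^^ k) {}" for k
  have Fs_Suc: "Fs (Suc k) = Fs k \<union> g (Fs k)" for k
    by (simp add: Fs_def)
  have Fs_step: "measure M (Fs (Suc k)) = measure M (Fs k) + measure M (g (Fs k))"
    if "Fs k \<in> sets M" "measure M (Fs k) \<le> t" for k
    using g[OF that(2)] that(1) unfolding Fs_Suc fits_def by (intro finite_measure_Union) auto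
  have Fs: "Fs k \<in> sets M \<and> Fs k \<subseteq> E \<and> measure M (Fs k) \<le> t" for k
  proof (induction k)
    case 0
    then show ?case using t by (simp add: Fs_def)
  next
    case (Suc k)
    then show ?case using g[of "Fs k"] Fs_step[of k] unfolding Fs_Suc fits_def by auto
  qed
  show ?thesis
  proof (rule that)
    show "incseq Fs"
      by (intro incseq_SucI) (simp add: Fs_Suc)
    fix k B assume "B \<in> sets M" "B \<subseteq> E - Fs k" "measure M B \<le> t - measure M (Fs k)"
    then show "measure M B \<le> 2 * (measure M (Fs (Suc k)) - measure M (Fs k))"
      using g[of "Fs k"] Fs[of k] Fs_step[of k] unfolding fits_def by auto
  qed (use Fs in auto)
qed

text \<open>Every greedy step adds at least half of what could still be added, so an event of positive
  measure that still fits at the limit would make the steps grow linearly.\<close>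

lemma (in finite_measure) exists_saturated_subevent:
  assumes t: "0 \<le> t"
  obtains F where "F \<in> sets M" "F \<subseteq> E" "measure M F \<le> t"
    "\<And>B. B \<in> sets M \<Longrightarrow> B \<subseteq> E - F \<Longrightarrow> measure M B \<le> t - measure M F \<Longrightarrow> measure M B = 0"
proof -
  obtain Fs where "incseq Fs" and Fs: "\<And>k. Fs k \<in> sets M" "\<And>k. Fs k \<subseteq> E" "\<And>k. measure M (Fs k) \<le> t"
    and greedy: "\<And>k B. B \<in> sets M \<Longrightarrow> B \<subseteq> E - Fs k \<Longrightarrow> measure M B \<le> t - measure M (Fs k) \<Longrightarrow>
      measure M B \<le> 2 * (measure M (Fs (Suc k)) - measure M (Fs k))"
    using exists_greedy_sequence[OF t] by blast
  define F where "F = (\<Union>k. Fs k)"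
  have "(\<lambda>k. measure M (Fs k)) \<longlonglongrightarrow> measure M F"
    unfolding F_def using Fs \<open>incseq Fs\<close> by (intro Lim_measure_incseq) auto
  then have F: "F \<in> sets M" "F \<subseteq> E" "measure M F \<le> t"
    using Fs unfolding F_def by (auto intro: LIMSEQ_le_const2)
  have Fs_le_F: "measure M (Fs k) \<le> measure M F" for k
    using F Fs unfolding F_def by (intro finite_measure_mono) auto
  show ?thesis
  proof (rule that[OF F])
    fix B assume B: "B \<in> sets M" "B \<subseteq> E - F" "measure M B \<le> t - measure M F"
    have growth: "real k * measure M B \<le> 2 * measure M (Fs k)" for k
    proof (induction k)
      case (Suc k)
      have "B \<subseteq> E - Fs k" "measure M B \<le> t - measure M (Fs k)"
        using B Fs_le_F[of k] unfolding F_def by auto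
      then have "measure M B \<le> 2 * (measure M (Fs (Suc k)) - measure M (Fs k))"
        using greedy[OF B(1)] by blast
      with Suc show ?case
        by (simp add: algebra_simps)
    qed simp
    have "\<not> 0 < measure M B"
    proof
      assume "0 < measure M B"
      then obtain k where "2 * measure M F < real k * measure M B"
        using reals_Archimedean3 by blast
      then show False
        using growth[of k] Fs_le_F[of k] by simp
    qed
    then show "measure M B = 0"
      using measure_nonneg[of M B] by linarith
  qed
qed

lemma (in finite_measure) atomless_subevent_of_measure:
  assumes atomless: "atomless M" and E: "E \<in> sets M" and t: "0 \<le> t" "t \<le> measure M E"
  shows "\<exists>F\<in>sets M. F \<subseteq> E \<and> measure M F = t"
proof -
  obtain F where F: "F \<in> sets M" "F \<subseteq> E" "measure M F \<le> t"
    and saturated: "\<And>B. B \<in> sets M \<Longrightarrow> B \<subseteq> E - F \<Longrightarrow> measure M B \<le> t - measure M F \<Longrightarrow> measure M B = 0"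
    using exists_saturated_subevent[OF t(1)] by blast
  have "\<not> measure M F < t"
  proof
    assume "measure M F < t"
    moreover have "measure M (E - F) = measure M E - measure M F"
      using E F by (simp add: finite_measure_Diff)
    ultimately obtain B where B: "B \<in> sets M" "B \<subseteq> E - F" "0 < measure M B" "measure M B < t - measure M F"
      using atomless_small_subevent[OF atomless, of "E - F" "t - measure M F"] E F t by auto
    then show False
      using saturated[OF B(1,2)] by linarith
  qed
  with F show ?thesis
    by (intro bexI[of _ F]) auto
qed

definition has_intermediate_events :: "'a measure \<Rightarrow> bool" where
  "has_intermediate_events M \<longleftrightarrow>
     (\<forall>H\<in>sets M. \<forall>E\<in>sets M. \<forall>G\<in>sets M. H \<subseteq> E \<longrightarrow> measure M H \<le> measure M G \<longrightarrow> measure M G \<le> measure M E \<longrightarrow>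
        (\<exists>F\<in>sets M. H \<subseteq> F \<and> F \<subseteq> E \<and> measure M F = measure M G))"

lemma (in finite_measure) has_intermediate_events_if_atomless:
  assumes "atomless M"
  shows "has_intermediate_events M"
  unfolding has_intermediate_events_def
proof (intro ballI impI)
  fix H E G
  assume events: "H \<in> sets M" "E \<in> sets M" "G \<in> sets M" and "H \<subseteq> E"
    and between: "measure M H \<le> measure M G" "measure M G \<le> measure M E"
  have "measure M (E - H) = measure M E - measure M H"
    using events \<open>H \<subseteq> E\<close> by (simp add: finite_measure_Diff)
  then obtain T where T: "T \<in> sets M" "T \<subseteq> E - H" "measure M T = measure M G - measure M H"
    using atomless_subevent_of_measure[OF assms, of "E - H" "measure M G - measure M H"] events between
    by auto
  then have "measure M (H \<union> T) = measure M G"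
    using events by (subst finite_measure_Union) auto
  then show "\<exists>F\<in>sets M. H \<subseteq> F \<and> F \<subseteq> E \<and> measure M F = measure M G"
    using T events \<open>H \<subseteq> E\<close> by (intro bexI[of _ "H \<union> T"]) auto
qed

lemma (in finite_measure) equiprobable_measure:
  assumes "equiprobable M" "F \<subseteq> space M"
  shows "measure M F = card F / card (space M)"
proof -
  have "finite F"
    using assms finite_subset unfolding equiprobable_def by blast
  then have "measure M F = (\<Sum>\<omega>\<in>F. measure M {\<omega>})"
    using assms unfolding equiprobable_def by (intro measure_eq_sum_singleton) auto
  also have "\<dots> = (\<Sum>\<omega>\<in>F. 1 / card (space M))"
    using assms unfolding equiprobable_def by (intro sum.cong) auto
  finally show ?thesis
    by simp
qed

lemma (in finite_measure) has_intermediate_events_if_equiprobable: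
  assumes equi: "equiprobable M"
  shows "has_intermediate_events M"
  unfolding has_intermediate_events_def
proof (intro ballI impI)
  fix H E G
  assume events: "H \<in> sets M" "E \<in> sets M" "G \<in> sets M" and "H \<subseteq> E"
    and between: "measure M H \<le> measure M G" "measure M G \<le> measure M E"
  have card_pos: "0 < card (space M)" and sets_eq: "sets M = Pow (space M)"
    using equi unfolding equiprobable_def by (auto simp: card_gt_0_iff)
  have finite: "finite E" "finite H"
    using events equi finite_subset unfolding equiprobable_def by blast+
  have "card H \<le> card G" "card G \<le> card E"
    using between events card_pos sets_eq by (auto simp: equiprobable_measure[OF equi] divide_le_cancel)
  moreover have "card (E - H) = card E - card H"
    using finite \<open>H \<subseteq> E\<close> by (simp add: card_Diff_subset)
  ultimately obtain T where T: "T \<subseteq> E - H" "card T = card G - card H"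
    by (metis diff_le_mono obtain_subset_with_card_n)
  then have "card (H \<union> T) = card G"
    using finite \<open>card H \<le> card G\<close> by (subst card_Un_disjoint) (auto intro: finite_subset)
  then have "measure M (H \<union> T) = measure M G"
    using T events sets_eq equiprobable_measure[OF equi, of "H \<union> T"] equiprobable_measure[OF equi, of G]
    by auto
  then show "\<exists>F\<in>sets M. H \<subseteq> F \<and> F \<subseteq> E \<and> measure M F = measure M G"
    using T events sets_eq \<open>H \<subseteq> E\<close> by (intro bexI[of _ "H \<union> T"]) auto
qed

lemma (in finite_measure) partition_into_events_of_measures:
  assumes interp: "has_intermediate_events M" and "finite I" "I \<noteq> {}"
    and "E \<in> sets M" "\<forall>i\<in>I. R i \<in> sets M" "(\<Sum>i\<in>I. measure M (R i)) = measure M E"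
  shows "\<exists>C. (\<forall>i\<in>I. C i \<in> sets M \<and> C i \<subseteq> E \<and> measure M (C i) = measure M (R i)) \<and> (\<Union>i\<in>I. C i) = E"
  using assms(2-)
proof (induction I arbitrary: E rule: finite_ne_induct)
  case (singleton i)
  then show ?case
    by (intro exI[of _ "\<lambda>_. E"]) auto
next
  case (insert i I)
  have "0 \<le> (\<Sum>j\<in>I. measure M (R j))"
    by (intro sum_nonneg) auto
  then have "measure M (R i) \<le> measure M E"
    using insert by simp
  then obtain F where F: "F \<in> sets M" "F \<subseteq> E" "measure M F = measure M (R i)"
    using interp insert.prems unfolding has_intermediate_events_def by (metis empty_subsetI measure_empty sets.empty_sets measure_nonneg insertCI)
  have sum_rest: "(\<Sum>j\<in>I. measure M (R j)) = measure M (E - F)"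
    using insert F by (simp add: finite_measure_Diff)
  obtain C where C: "\<forall>j\<in>I. C j \<in> sets M \<and> C j \<subseteq> E - F \<and> measure M (C j) = measure M (R j)"
    "(\<Union>j\<in>I. C j) = E - F"
    using insert.IH[OF _ _ sum_rest] insert.prems F by blast
  have "(\<Union>j\<in>insert i I. (C(i := F)) j) = E"
    using C(2) F(2) \<open>i \<notin> I\<close> by auto
  then show ?case
    using C(1) F \<open>i \<notin> I\<close> by (intro exI[of _ "C(i := F)"]) auto
qed

lemma (in finite_measure) measure_Collect_gt_le_if_right:
  fixes X :: "'a \<Rightarrow> real"
  assumes S: "S \<in> sets M" and X: "X \<in> borel_measurable M"
    and right: "\<And>x. c < x \<Longrightarrow> measure M {\<omega>\<in>S. x < X \<omega>} \<le> p"
  shows "measure M {\<omega>\<in>S. c < X \<omega>} \<le> p"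
proof -
  define W where "W k = {\<omega>\<in>S. c + 1 / Suc k < X \<omega>}" for k
  have W_mono: "incseq W"
  proof (intro incseq_SucI)
    fix k
    have "1 / real (Suc (Suc k)) \<le> 1 / Suc k"
      by (simp add: frac_le)
    then show "W k \<subseteq> W (Suc k)"
      unfolding W_def by auto
  qed
  moreover have W_limit: "(\<Union>k. W k) = {\<omega>\<in>S. c < X \<omega>}"
  proof (intro equalityI subsetI)
    fix \<omega> assume \<omega>: "\<omega> \<in> {\<omega>\<in>S. c < X \<omega>}"
    then obtain k where "1 / Suc k < X \<omega> - c"
      using nat_approx_posE[of "X \<omega> - c"] by auto
    with \<omega> show "\<omega> \<in> (\<Union>k. W k)"
      unfolding W_def by (auto simp: algebra_simps)
  next
    fix \<omega> assume "\<omega> \<in> (\<Union>k. W k)"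
    then obtain k where "\<omega> \<in> S" "c + 1 / Suc k < X \<omega>"
      unfolding W_def by blast
    moreover have "0 < 1 / real (Suc k)"
      by simp
    ultimately have "c < X \<omega>"
      by linarith
    with \<open>\<omega> \<in> S\<close> show "\<omega> \<in> {\<omega>\<in>S. c < X \<omega>}"
      by simp
  qed
  moreover have "range W \<subseteq> sets M"
    unfolding W_def using S X by auto
  ultimately have "(\<lambda>k. measure M (W k)) \<longlonglongrightarrow> measure M {\<omega>\<in>S. c < X \<omega>}"
    unfolding W_limit[symmetric] by (intro finite_Lim_measure_incseq)
  moreover have "measure M (W k) \<le> p" for k
    unfolding W_def by (rule right) simp
  ultimately show ?thesis
    by (intro LIMSEQ_le_const2) auto
qed

lemma (in finite_measure) measure_Collect_ge_ge_if_left: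
  fixes X :: "'a \<Rightarrow> real"
  assumes S: "S \<in> sets M" and X: "X \<in> borel_measurable M"
    and left: "\<And>x. x < c \<Longrightarrow> p \<le> measure M {\<omega>\<in>S. x < X \<omega>}"
  shows "p \<le> measure M {\<omega>\<in>S. c \<le> X \<omega>}"
proof -
  define W where "W k = {\<omega>\<in>S. c - 1 / Suc k < X \<omega>}" for k
  have W_mono: "decseq W"
  proof (intro decseq_SucI)
    fix k
    have "1 / real (Suc (Suc k)) \<le> 1 / Suc k"
      by (simp add: frac_le)
    then show "W (Suc k) \<subseteq> W k"
      unfolding W_def by auto
  qed
  moreover have W_limit: "(\<Inter>k. W k) = {\<omega>\<in>S. c \<le> X \<omega>}"
  proof (intro equalityI subsetI)
    fix \<omega> assume \<omega>: "\<omega> \<in> (\<Inter>k. W k)"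
    have "c \<le> X \<omega>"
    proof (rule ccontr)
      assume "\<not> c \<le> X \<omega>"
      then obtain k where "1 / Suc k < c - X \<omega>"
        using nat_approx_posE[of "c - X \<omega>"] by auto
      moreover have "c - 1 / Suc k < X \<omega>"
        using \<omega> unfolding W_def by blast
      ultimately show False
        by linarith
    qed
    then show "\<omega> \<in> {\<omega>\<in>S. c \<le> X \<omega>}"
      using \<omega> unfolding W_def by auto
  qed (auto simp: W_def intro: less_le_trans[of _ c, rotated])
  moreover have "range W \<subseteq> sets M"
    unfolding W_def using S X by auto
  ultimately have "(\<lambda>k. measure M (W k)) \<longlonglongrightarrow> measure M {\<omega>\<in>S. c \<le> X \<omega>}"
    unfolding W_limit[symmetric] by (intro finite_Lim_measure_decseq)
  moreover have "p \<le> measure M (W k)" for k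
    unfolding W_def by (rule left) simp
  ultimately show ?thesis
    by (intro LIMSEQ_le_const) auto
qed

lemma (in finite_measure) exists_quantile_threshold:
  fixes X :: "'a \<Rightarrow> real"
  assumes S: "S \<in> sets M" and X: "X \<in> borel_measurable M" "\<forall>\<omega>\<in>space M. \<bar>X \<omega>\<bar> \<le> K"
    and p: "0 \<le> p" "p \<le> measure M S"
  shows "\<exists>c. measure M {\<omega>\<in>S. c < X \<omega>} \<le> p \<and> p \<le> measure M {\<omega>\<in>S. c \<le> X \<omega>}"
proof (cases "p = measure M S")
  case True
  have "{\<omega>\<in>S. -K \<le> X \<omega>} = S"
    using X(2) sets.sets_into_space[OF S] by (force simp: abs_le_iff)
  then show ?thesis
    using True S by (intro exI[of _ "-K"]) (auto intro!: finite_measure_mono)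
next
  case False
  define T where "T = {x. measure M {\<omega>\<in>S. x < X \<omega>} \<le> p}"
  have nothing_above: "{\<omega>\<in>S. K < X \<omega>} = {}"
    using X(2) sets.sets_into_space[OF S] by (force simp: abs_le_iff)
  have "K \<in> T"
    unfolding T_def mem_Collect_eq nothing_above using p by simp
  have "- K \<le> x" if "x \<in> T" for x
  proof (rule ccontr)
    assume "\<not> - K \<le> x"
    then have "{\<omega>\<in>S. x < X \<omega>} = S"
      using X(2) sets.sets_into_space[OF S] by (force simp: abs_le_iff)
    then show False
      using that False p unfolding T_def by simp
  qed
  then have bdd: "bdd_below T"
    by (intro bdd_belowI)
  define c where "c = Inf T"
  have "measure M {\<omega>\<in>S. c < X \<omega>} \<le> p"
  proof (rule measure_Collect_gt_le_if_right[OF S X(1)])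
    fix x assume "c < x"
    then obtain y where "y \<in> T" "y < x"
      using cInf_less_iff[OF _ bdd] \<open>K \<in> T\<close> unfolding c_def by blast
    then have "measure M {\<omega>\<in>S. x < X \<omega>} \<le> measure M {\<omega>\<in>S. y < X \<omega>}"
      using S X(1) by (intro finite_measure_mono) auto
    with \<open>y \<in> T\<close> show "measure M {\<omega>\<in>S. x < X \<omega>} \<le> p"
      unfolding T_def by simp
  qed
  moreover have "p \<le> measure M {\<omega>\<in>S. c \<le> X \<omega>}"
  proof (rule measure_Collect_ge_ge_if_left[OF S X(1)])
    fix x assume "x < c"
    then have "x \<notin> T"
      using cInf_lower[OF _ bdd] unfolding c_def by force
    then show "p \<le> measure M {\<omega>\<in>S. x < X \<omega>}"
      unfolding T_def by simp
  qed
  ultimately show ?thesis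
    by blast
qed

lemma (in finite_measure) exists_upper_subevent:
  fixes X :: "'a \<Rightarrow> real"
  assumes interp: "has_intermediate_events M"
    and S: "S \<in> sets M" and X: "X \<in> borel_measurable M" "\<forall>\<omega>\<in>space M. \<bar>X \<omega>\<bar> \<le> K"
    and G: "G \<in> sets M" "measure M G \<le> measure M S"
  obtains B c where "B \<in> sets M" "B \<subseteq> S" "measure M B = measure M G"
    "\<forall>\<omega>\<in>B. c \<le> X \<omega>" "\<forall>\<omega>\<in>S - B. X \<omega> \<le> c"
proof -
  obtain c where c: "measure M {\<omega>\<in>S. c < X \<omega>} \<le> measure M G" "measure M G \<le> measure M {\<omega>\<in>S. c \<le> X \<omega>}"
    using exists_quantile_threshold[OF S X measure_nonneg G(2)] by blast
  moreover have "{\<omega>\<in>S. c < X \<omega>} \<in> sets M" "{\<omega>\<in>S. c \<le> X \<omega>} \<in> sets M"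
    using S X by auto
  ultimately obtain B where "B \<in> sets M" "{\<omega>\<in>S. c < X \<omega>} \<subseteq> B" "B \<subseteq> {\<omega>\<in>S. c \<le> X \<omega>}"
    "measure M B = measure M G"
    using interp G unfolding has_intermediate_events_def by (metis (no_types, lifting) Collect_mono less_imp_le)
  then show ?thesis
    by (intro that[of B c]) (auto simp: not_less[symmetric])
qed

lemma exists_disjoint_refinement:
  fixes A :: "nat \<Rightarrow> 'a set"
  assumes "E \<in> sets M" "\<forall>i\<in>I. A i \<in> sets M" "E \<subseteq> (\<Union>i\<in>I. A i)"
  obtains R where "disjoint_family_on R I" "(\<Union>i\<in>I. R i) = E" "\<forall>i\<in>I. R i \<in> sets M \<and> R i \<subseteq> E \<inter> A i"
proof -
  define A' where "A' i = (if i \<in> I then A i else {})" for i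
  define R where "R i = E \<inter> disjointed A' i" for i
  have "range A' \<subseteq> sets M"
    using assms(2) unfolding A'_def by auto
  then have "disjointed A' i \<in> sets M" for i
    using sets.range_disjointed_sets by blast
  then have R_sets: "R i \<in> sets M" for i
    unfolding R_def using assms(1) by (intro sets.Int)
  have R_sub: "R i \<subseteq> E \<inter> A' i" for i
    unfolding R_def using disjointed_subset[of A' i] by blast
  have "disjoint_family R"
    using disjoint_family_disjointed[of A'] unfolding R_def disjoint_family_on_def by blast
  then have "disjoint_family_on R I"
    by (rule disjoint_family_on_mono[rotated]) simp
  have "(\<Union>i. R i) = E \<inter> (\<Union>i. disjointed A' i)"
    unfolding R_def by blast
  also have "\<dots> = E"
    using assms(3) unfolding UN_disjointed_eq A'_def by auto
  finally have "(\<Union>i. R i) = E" .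
  moreover have "R i = {}" if "i \<notin> I" for i
    using R_sub[of i] that unfolding A'_def by simp
  ultimately have "(\<Union>i\<in>I. R i) = E"
    by blast
  moreover have "R i \<subseteq> E \<inter> A i" if "i \<in> I" for i
    using R_sub[of i] that unfolding A'_def by simp
  ultimately show ?thesis
    using \<open>disjoint_family_on R I\<close> R_sets by (intro that[of R]) auto
qed

lemma (in finite_measure) exists_matching_pieces:
  fixes A :: "nat \<Rightarrow> 'a set"
  assumes interp: "has_intermediate_events M" and I: "finite I" "I \<noteq> {}"
    and sets: "E \<in> sets M" "F \<in> sets M" "\<forall>i\<in>I. A i \<in> sets M"
    and cover: "E \<subseteq> (\<Union>i\<in>I. A i)" and same: "measure M E = measure M F"
  obtains R C where "\<forall>i\<in>I. R i \<in> sets M \<and> R i \<subseteq> E \<inter> A i \<and> C i \<in> sets M \<and> C i \<subseteq> F \<and>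
      measure M (C i) = measure M (R i)"
    "(\<Union>i\<in>I. C i) = F"
proof -
  obtain R where R: "disjoint_family_on R I" "(\<Union>i\<in>I. R i) = E" "\<forall>i\<in>I. R i \<in> sets M \<and> R i \<subseteq> E \<inter> A i"
    using exists_disjoint_refinement[OF sets(1,3) cover] by blast
  have "R ` I \<subseteq> sets M"
    using R(3) by blast
  then have "(\<Sum>i\<in>I. measure M (R i)) = measure M F"
    using finite_measure_finite_Union[OF I(1) _ R(1)] R(2) same by simp
  then obtain C where "\<forall>i\<in>I. C i \<in> sets M \<and> C i \<subseteq> F \<and> measure M (C i) = measure M (R i)"
      "(\<Union>i\<in>I. C i) = F"
    using partition_into_events_of_measures[OF interp I sets(2)] R(3) by blast
  with R(3) show ?thesis
    by (intro that[of R C]) auto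
qed

lemma (in finite_measure) measure_exchange_le:
  assumes "K \<in> sets M" "R \<in> sets M" "C \<in> sets M" "R \<subseteq> K" "measure M C \<le> measure M R"
  shows "measure M (K - R \<union> C) \<le> measure M K"
proof -
  have "measure M (K - R \<union> C) \<le> measure M (K - R) + measure M C"
    using assms by (intro measure_Un_le) auto
  also have "\<dots> \<le> measure M (K - R) + measure M R"
    using assms by simp
  also have "\<dots> = measure M K"
    using assms by (simp add: finite_measure_Diff)
  finally show ?thesis .
qed

lemma (in finite_measure) measure_upper_replacement_le_if_density_decreasing:
  assumes Q: "finite_measure Q" "sets Q = sets M" "absolutely_continuous M Q"
    and dec: "density_decreasing_in M Q X"
    and K: "K \<in> sets M" and B: "B \<in> sets M" "measure M B \<le> measure M K"
    and above: "\<forall>\<omega>\<in>B. c \<le> X \<omega>" and below: "\<forall>\<omega>\<in>K - B. X \<omega> \<le> c"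
  shows "measure Q B \<le> measure Q K"
proof -
  have "measure M (B - K) \<le> measure M (K - B)"
    using K B by (simp add: finite_measure_Diff' Int_commute)
  then have "measure Q (B - K) \<le> measure Q (K - B)"
    using K B above below by (intro measure_le_if_density_decreasing[OF Q dec, of _ _ c]) auto
  moreover have "B = K - (K - B) \<union> (B - K)"
    by blast
  ultimately show ?thesis
    using K B Q by (metis finite_measure.measure_exchange_le Diff_subset sets.Diff)
qed

lemma (in finite_measure) measure_exchange_le_if_density_increasing:
  assumes Q: "finite_measure Q" "sets Q = sets M" "absolutely_continuous M Q"
    and inc: "density_increasing_in M Q X"
    and sets: "K \<in> sets M" "R \<in> sets M" "C \<in> sets M" and "R \<subseteq> K" "measure M C \<le> measure M R"
    and "\<forall>\<omega>\<in>C. X \<omega> \<le> c" "\<forall>\<omega>\<in>R. c \<le> X \<omega>"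
  shows "measure Q (K - R \<union> C) \<le> measure Q K"
proof -
  have "measure Q C \<le> measure Q R"
    using measure_le_if_density_increasing[OF Q inc] assms by blast
  then show ?thesis
    using finite_measure.measure_exchange_le[OF Q(1)] Q(2) sets \<open>R \<subseteq> K\<close> by simp
qed

lemma rearranged_composition_in_Pi_n:
  assumes A: "A \<in> Pi_n M n" and n: "2 \<le> n"
    and sets: "S \<in> sets M" "B \<in> sets M" "\<forall>i\<in>{2..n}. R i \<in> sets M \<and> C i \<in> sets M \<and> R i \<subseteq> B"
    and reassigned: "A 1 \<inter> S - (\<Union>j\<in>{2..n}. A j) \<subseteq> B \<union> (\<Union>i\<in>{2..n}. C i)"
  shows "(\<lambda>i. if i = 1 then B else A i - R i \<union> C i \<union> (space M - S)) \<in> Pi_n M n"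
    (is "?A' \<in> _")
proof -
  have A_sets: "\<forall>i\<in>{1..n}. A i \<in> sets M" and A_cover: "(\<Union>i\<in>{1..n}. A i) = space M"
    using A unfolding Pi_n_def by auto
  have A'_sets: "?A' i \<in> sets M" if "i \<in> {1..n}" for i
  proof (cases "i = 1")
    case False
    with that have "i \<in> {2..n}"
      by auto
    then show ?thesis
      using bspec[OF sets(3) \<open>i \<in> {2..n}\<close>] bspec[OF A_sets that] sets(1) by auto
  qed (use sets in simp)
  have "space M \<subseteq> (\<Union>i\<in>{1..n}. ?A' i)"
  proof
    fix \<omega> assume \<omega>: "\<omega> \<in> space M"
    then obtain i where i: "i \<in> {1..n}" "\<omega> \<in> A i"
      using A_cover by blast
    show "\<omega> \<in> (\<Union>i\<in>{1..n}. ?A' i)"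
    proof (cases "\<omega> \<in> B")
      case True
      then show ?thesis using n by (intro UN_I[of 1]) auto
    next
      case False
      have "\<omega> \<notin> S \<or> (\<exists>j\<in>{2..n}. \<omega> \<in> A j \<or> \<omega> \<in> C j)"
        using i reassigned False by (cases "i = 1") fastforce+
      then show ?thesis
      proof
        assume "\<omega> \<notin> S"
        then show ?thesis using n \<omega> by (intro UN_I[of 2]) auto
      next
        assume "\<exists>j\<in>{2..n}. \<omega> \<in> A j \<or> \<omega> \<in> C j"
        then obtain j where "j \<in> {2..n}" "\<omega> \<in> A j \<or> \<omega> \<in> C j"
          by blast
        then show ?thesis using False sets(3) by (intro UN_I[of j]) auto
      qed
    qed
  qed
  with A'_sets show ?thesis
    using sets.sets_into_space unfolding Pi_n_def by blast
qed

definition tail_event :: "'a measure \<Rightarrow> ('a \<Rightarrow> real) \<Rightarrow> 'a set \<Rightarrow> bool" where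
  "tail_event M X A \<longleftrightarrow> (\<forall>\<omega>\<in>A. \<forall>\<omega>'\<in>space M - A. X \<omega>' \<le> X \<omega>)"

lemma tail_event_if_upper_part:
  assumes "tail_event M X S" "B \<subseteq> S" "\<forall>\<omega>\<in>B. c \<le> X \<omega>" "\<forall>\<omega>\<in>S - B. X \<omega> \<le> c"
  shows "tail_event M X B"
  unfolding tail_event_def
proof (intro ballI)
  fix \<omega> \<omega>' assume \<omega>: "\<omega> \<in> B" and \<omega>': "\<omega>' \<in> space M - B"
  show "X \<omega>' \<le> X \<omega>"
  proof (cases "\<omega>' \<in> S")
    case True
    then have "X \<omega>' \<le> c"
      using assms(4) \<omega>' by blast
    also have "c \<le> X \<omega>"
      using assms(3) \<omega> by blast
    finally show ?thesis .
  next
    case False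
    then show ?thesis
      using assms(1,2) \<omega> \<omega>' unfolding tail_event_def by blast
  qed
qed

lemma (in finite_measure) exists_exchange_plan:
  fixes X :: "'a \<Rightarrow> real" and A :: "nat \<Rightarrow> 'a set"
  assumes interp: "has_intermediate_events M"
    and X: "X \<in> borel_measurable M" "\<forall>\<omega>\<in>space M. \<bar>X \<omega>\<bar> \<le> K"
    and S: "S \<in> sets M" and n: "2 \<le> n" and A: "A \<in> Pi_n M n"
  obtains B c R C where "B \<in> sets M" "B \<subseteq> S" "measure M B \<le> measure M (A 1 \<inter> S)"
    "\<forall>\<omega>\<in>B. c \<le> X \<omega>" "\<forall>\<omega>\<in>S - B. X \<omega> \<le> c"
    "\<forall>i\<in>{2..n}. R i \<in> sets M \<and> R i \<subseteq> B \<inter> A i \<and> C i \<in> sets M \<and> C i \<subseteq> S - B \<and>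
       measure M (C i) = measure M (R i)"
    "A 1 \<inter> S - (\<Union>j\<in>{2..n}. A j) \<subseteq> B \<union> (\<Union>i\<in>{2..n}. C i)"
proof -
  have A_sets: "\<forall>i\<in>{1..n}. A i \<in> sets M" and A_cover: "(\<Union>i\<in>{1..n}. A i) = space M"
    using A unfolding Pi_n_def by auto
  define D where "D = A 1 \<inter> S - (\<Union>j\<in>{2..n}. A j)"
  have D: "D \<in> sets M" "D \<subseteq> A 1 \<inter> S" "A 1 \<inter> S \<in> sets M"
    unfolding D_def using A_sets S n by auto
  then obtain B c where B: "B \<in> sets M" "B \<subseteq> S" "measure M B = measure M D"
      and threshold: "\<forall>\<omega>\<in>B. c \<le> X \<omega>" "\<forall>\<omega>\<in>S - B. X \<omega> \<le> c"
    using exists_upper_subevent[OF interp S(1) X D(1)] finite_measure_mono[of D S] S(1) by auto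
  have cover_rest: "B - D \<subseteq> (\<Union>j\<in>{2..n}. A j)"
  proof
    fix \<omega> assume \<omega>: "\<omega> \<in> B - D"
    then obtain i where "i \<in> {1..n}" "\<omega> \<in> A i"
      using B(2) sets.sets_into_space[OF S(1)] A_cover by blast
    with \<omega> B(2) show "\<omega> \<in> (\<Union>j\<in>{2..n}. A j)"
      unfolding D_def by (cases "i = 1") auto
  qed
  have same_measure: "measure M (B - D) = measure M (D - B)"
    using B D by (simp add: finite_measure_Diff' Int_commute)
  obtain R C where pieces: "\<forall>i\<in>{2..n}. R i \<in> sets M \<and> R i \<subseteq> (B - D) \<inter> A i \<and>
      C i \<in> sets M \<and> C i \<subseteq> D - B \<and> measure M (C i) = measure M (R i)" "(\<Union>i\<in>{2..n}. C i) = D - B"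
    using exists_matching_pieces[OF interp finite_atLeastAtMost _ _ _ _ cover_rest same_measure] n A_sets B D
    by auto
  show ?thesis
  proof (rule that[OF B(1,2) _ threshold])
    show "measure M B \<le> measure M (A 1 \<inter> S)"
      using B(3) D by (simp add: finite_measure_mono)
    show "\<forall>i\<in>{2..n}. R i \<in> sets M \<and> R i \<subseteq> B \<inter> A i \<and> C i \<in> sets M \<and> C i \<subseteq> S - B \<and>
        measure M (C i) = measure M (R i)"
      using pieces(1) D(2) by blast
    show "A 1 \<inter> S - (\<Union>j\<in>{2..n}. A j) \<subseteq> B \<union> (\<Union>i\<in>{2..n}. C i)"
      using pieces(2) unfolding D_def by blast
  qed
qed

lemma (in finite_measure) tail_rearrangement:
  fixes X :: "'a \<Rightarrow> real"
  assumes interp: "has_intermediate_events M"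
    and X: "X \<in> borel_measurable M" "\<forall>\<omega>\<in>space M. \<bar>X \<omega>\<bar> \<le> K"
    and S: "S \<in> sets M" "tail_event M X S" and n: "2 \<le> n" and A: "A \<in> Pi_n M n"
    and PP: "\<forall>i\<in>{1..n}. \<forall>Q\<in>PP i. finite_measure Q \<and> sets Q = sets M \<and> absolutely_continuous M Q"
    and dec: "\<forall>Q\<in>PP 1. density_decreasing_in M Q X"
    and inc: "\<forall>i\<in>{2..n}. \<forall>Q\<in>PP i. density_increasing_in M Q X"
  shows "\<exists>A'\<in>Pi_n M n. tail_event M X (A' 1) \<and> (\<forall>i\<in>{1..n}. \<forall>Q\<in>PP i. measure Q (A' i \<inter> S) \<le> measure Q (A i \<inter> S))"
proof -
  obtain B c R C where B: "B \<in> sets M" "B \<subseteq> S" "measure M B \<le> measure M (A 1 \<inter> S)"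
      and threshold: "\<forall>\<omega>\<in>B. c \<le> X \<omega>" "\<forall>\<omega>\<in>S - B. X \<omega> \<le> c"
      and pieces: "\<forall>i\<in>{2..n}. R i \<in> sets M \<and> R i \<subseteq> B \<inter> A i \<and> C i \<in> sets M \<and> C i \<subseteq> S - B \<and>
         measure M (C i) = measure M (R i)"
      and reassigned: "A 1 \<inter> S - (\<Union>j\<in>{2..n}. A j) \<subseteq> B \<union> (\<Union>i\<in>{2..n}. C i)"
    using exists_exchange_plan[OF interp X S(1) n A] by blast
  define A' where "A' i = (if i = 1 then B else A i - R i \<union> C i \<union> (space M - S))" for i
  have A_sets: "\<forall>i\<in>{1..n}. A i \<in> sets M"
    using A unfolding Pi_n_def by auto
  have "A' \<in> Pi_n M n"
    unfolding A'_def using rearranged_composition_in_Pi_n[OF A n S(1) B(1) _ reassigned] pieces by blast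
  moreover have "tail_event M X (A' 1)"
    unfolding A'_def using tail_event_if_upper_part[OF S(2) B(2) threshold] by simp
  moreover have "measure Q (A' i \<inter> S) \<le> measure Q (A i \<inter> S)" if i: "i \<in> {1..n}" and Q: "Q \<in> PP i" for i Q
  proof (cases "i = 1")
    case True
    have "A' 1 \<inter> S = B" "A 1 \<inter> S - B \<subseteq> S - B"
      using B(2) unfolding A'_def by auto
    then show ?thesis
      using measure_upper_replacement_le_if_density_decreasing[of Q X "A 1 \<inter> S" B c] bspec[OF PP i] Q dec True
        A_sets i S(1) B threshold by auto
  next
    case False
    with i have i2: "i \<in> {2..n}"
      by auto
    then have "R i \<in> sets M" "R i \<subseteq> A i \<inter> S" "\<forall>\<omega>\<in>R i. c \<le> X \<omega>" "C i \<in> sets M" "C i \<subseteq> S - B"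
      "measure M (C i) \<le> measure M (R i)" "\<forall>\<omega>\<in>C i. X \<omega> \<le> c"
      using bspec[OF pieces i2] B(2) threshold by auto
    moreover have "A' i \<inter> S = A i \<inter> S - R i \<union> C i"
      using False \<open>C i \<subseteq> S - B\<close> unfolding A'_def by auto
    ultimately show ?thesis
      using measure_exchange_le_if_density_increasing[of Q X "A i \<inter> S" "R i" "C i" c] bspec[OF PP i] Q
        bspec[OF inc i2] A_sets i S(1) by auto
  qed
  ultimately show ?thesis
    by blast
qed

theorem proposition8:
  fixes M :: "'a measure" and n :: nat and PP :: "nat \<Rightarrow> 'a measure set"
    and \<alpha> :: "nat \<Rightarrow> real" and X :: "'a \<Rightarrow> real"
  assumes "prob_space M"
    and "atomless M \<or> equiprobable M"
    and "n \<ge> 1"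
    and "\<forall>i\<in>{1..n}. PP i \<noteq> {}"
    and "\<forall>i\<in>{1..n}. \<forall>Q\<in>PP i. prob_space Q \<and> sets Q = sets M \<and> absolutely_continuous M Q"
    and "\<forall>i\<in>{1..n}. 0 < \<alpha> i \<and> \<alpha> i < 1"
    and "bounded_rv M X"
    and "\<forall>Q\<in>PP 1. density_decreasing_in M Q X"
    and "\<forall>i\<in>{2..n}. \<forall>Q\<in>PP i. density_increasing_in M Q X"
    and "x_star = inf_conv M n (\<lambda>i. robust_VaR (PP i) (\<alpha> i)) X"
    and "x_star > -\<infinity>"
    and "A \<in> Pi_n M n"
    and "\<forall>i\<in>{1..n}. \<forall>Q\<in>PP i. measure Q (A i \<inter> {\<omega>\<in>space M. ereal (X \<omega>) > x_star}) \<le> \<alpha> i"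
  shows "\<exists>A'\<in>Pi_n M n.
           (\<forall>i\<in>{1..n}. \<forall>Q\<in>PP i. measure Q (A' i \<inter> {\<omega>\<in>space M. ereal (X \<omega>) > x_star}) \<le> \<alpha> i)
         \<and> (\<forall>\<omega>\<in>A' 1. \<forall>\<omega>'\<in>space M - A' 1. X \<omega> \<ge> X \<omega>')"
proof -
  interpret prob_space M by fact
  obtain K where X: "X \<in> borel_measurable M" "\<forall>\<omega>\<in>space M. \<bar>X \<omega>\<bar> \<le> K"
    using assms(7) unfolding bounded_rv_def by blast
  define S where "S = {\<omega>\<in>space M. x_star < ereal (X \<omega>)}"
  have S: "S \<in> sets M" "tail_event M X S"
    unfolding S_def tail_event_def using X(1) by (auto intro: less_imp_le simp flip: ereal_less_eq(3))
  have interp: "has_intermediate_events M"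
    using assms(2) has_intermediate_events_if_atomless has_intermediate_events_if_equiprobable by blast
  have PP: "\<forall>i\<in>{1..n}. \<forall>Q\<in>PP i. finite_measure Q \<and> sets Q = sets M \<and> absolutely_continuous M Q"
    using assms(5) prob_space.finite_measure by blast
  have "\<exists>A'\<in>Pi_n M n. tail_event M X (A' 1) \<and>
      (\<forall>i\<in>{1..n}. \<forall>Q\<in>PP i. measure Q (A' i \<inter> S) \<le> measure Q (A i \<inter> S))"
  proof (cases "n = 1")
    case True
    with assms(12) show ?thesis
      unfolding Pi_n_def tail_event_def by (intro bexI[of _ A]) auto
  next
    case False
    with assms(3) show ?thesis
      using tail_rearrangement[OF interp X S _ assms(12) PP assms(8,9)] by simp
  qed
  then obtain A' where "A' \<in> Pi_n M n" "tail_event M X (A' 1)"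
    and improved: "\<forall>i\<in>{1..n}. \<forall>Q\<in>PP i. measure Q (A' i \<inter> S) \<le> measure Q (A i \<inter> S)"
    by blast
  with assms(13) show ?thesis
    unfolding S_def tail_event_def by (blast intro: order_trans)
qed

end
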